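(* Consider a finite reward-free MDP with occupancy polytope $\Phi$, let $d_e^\star\in\Phi$ be the occupancy measure of an optimal demonstrator, and let $\mathcal D=\{(d_e^k,\epsilon^k)\}_{k=1}^K$ be a dataset with $d_e^k\in\Phi$, $\epsilon^k\ge0$ and $\mathcal R(\mathcal D)\neq\emptyset$. Then \[ \mathrm{Gap}\big(\mathcal R(\mathcal D),\mathcal R(d_e^\star)\big)\le\min_{(d,\epsilon)\in\mathrm{conv}(\mathcal D)}\big\{\|d-d_e^\star\|_1+\epsilon\big\}, \] where $\mathrm{conv}(\mathcal D)$ is the convex hull of the pairs $(d_e^k,\epsilon^k)$, $k\in[K]$, viewed as points of $\mathbb R^{S\times A}\times\mathbb R$.
   Context: The MDP has finite state set $S$, finite action set $A$, transitions $P(s'\mid s,a)$, initial distribution $\mu_0$, discount $\gamma\in(0,1)$; $M$ is defined by $(Md)(s)=\sum_a d(s,a)-\gamma\sum_{s',a'}P(s\mid s',a')d(s',a')$ and $\Phi=\{d\ge0:Md=(1-\gamma)\mu_0\}$. Rewards are $r\in\Delta(S\times A)$ (probability simplex). $\mathrm{subopt}(r,d):=\max_{\tilde d\in\Phi}r^\top\tilde d-r^\top d$. $\mathcal R(\mathcal D):=\{r\in\Delta(S\times A):\mathrm{subopt}(r,d_e^k)\le\epsilon^k\ \forall k\}$; $\mathcal R(d_e^\star):=\{r\in\Delta(S\times A):\mathrm{subopt}(r,d_e^\star)=0\}$. For a set of rewards $\mathcal R$, $\mathrm{Gap}(\mathcal R,\mathcal R(d_e^\star)):=\max_{r\in\mathcal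 R}\mathrm{subopt}(r,d_e^\star)$. *)

theory Defs
  imports "HOL-Analysis.Analysis"
begin

text \<open>Occupancy measures and rewards are vectors in R^(S x A), modelled as
  real ^ ('s \<times> 'a) with finite state type 's and action type 'a.
  Transition kernel: P s a s' = P(s' | s, a).\<close>

definition Mop :: "('s::finite \<Rightarrow> 'a::finite \<Rightarrow> 's \<Rightarrow> real) \<Rightarrow> real \<Rightarrow> real ^ ('s \<times> 'a) \<Rightarrow> 's \<Rightarrow> real" where
  "Mop P \<gamma> d s = (\<Sum>a\<in>UNIV. d $ (s, a)) - \<gamma> * (\<Sum>(s', a')\<in>UNIV. P s' a' s * d $ (s', a'))"

definition Phi :: "('s::finite \<Rightarrow> 'a::finite \<Rightarrow> 's \<Rightarrow> real) \<Rightarrow> ('s \<Rightarrow> real) \<Rightarrow> real \<Rightarrow> (real ^ ('s \<times> 'a)) set" where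
  "Phi P \<mu>0 \<gamma> = {d. (\<forall>x. 0 \<le> d $ x) \<and> (\<forall>s. Mop P \<gamma> d s = (1 - \<gamma>) * \<mu>0 s)}"

definition reward_simplex :: "(real ^ ('n::finite)) set" where
  "reward_simplex = {r. (\<forall>x. 0 \<le> r $ x) \<and> (\<Sum>x\<in>UNIV. r $ x) = 1}"

definition subopt :: "('s::finite \<Rightarrow> 'a::finite \<Rightarrow> 's \<Rightarrow> real) \<Rightarrow> ('s \<Rightarrow> real) \<Rightarrow> real \<Rightarrow> real ^ ('s \<times> 'a) \<Rightarrow> real ^ ('s \<times> 'a) \<Rightarrow> real" where
  "subopt P \<mu>0 \<gamma> r d = (SUP d'\<in>Phi P \<mu>0 \<gamma>. r \<bullet> d') - r \<bullet> d"

definition RD :: "('s::finite \<Rightarrow> 'a::finite \<Rightarrow> 's \<Rightarrow> real) \<Rightarrow> ('s \<Rightarrow> real) \<Rightarrow> real \<Rightarrow> nat \<Rightarrow> (nat \<Rightarrow> real ^ ('s \<times> 'a)) \<Rightarrow> (nat \<Rightarrow> real) \<Rightarrow> (real ^ ('s \<times> 'a)) set" where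
  "RD P \<mu>0 \<gamma> K dk eps = {r \<in> reward_simplex. \<forall>k<K. subopt P \<mu>0 \<gamma> r (dk k) \<le> eps k}"

definition Gap :: "('s::finite \<Rightarrow> 'a::finite \<Rightarrow> 's \<Rightarrow> real) \<Rightarrow> ('s \<Rightarrow> real) \<Rightarrow> real \<Rightarrow> (real ^ ('s \<times> 'a)) set \<Rightarrow> real ^ ('s \<times> 'a) \<Rightarrow> real" where
  "Gap P \<mu>0 \<gamma> R dstar = (SUP r\<in>R. subopt P \<mu>0 \<gamma> r dstar)"

definition l1dist :: "real ^ ('n::finite) \<Rightarrow> real ^ 'n \<Rightarrow> real" where
  "l1dist d e = (\<Sum>x\<in>UNIV. \<bar>d $ x - e $ x\<bar>)"

end

theory Submission
  imports Defs
begin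

text \<open>For a fixed reward r, the suboptimality d \<mapsto> subopt r d is an affine function of d
  (a constant minus r \<bullet> d). Hence every feasible reward, which satisfies
  subopt r (dk k) \<le> eps k at the data points, also satisfies subopt r d \<le> e on their
  convex hull, and since the entries of r lie in [0, 1], moving from d to dstar changes
  the suboptimality by at most the l1 distance. The MDP structure plays no role: only
  R(D) \<noteq> {} and K > 0 are needed, so that the SUP and the INF are not junk values.\<close>

lemma subopt_diff:
  "subopt P \<mu>0 \<gamma> r e - subopt P \<mu>0 \<gamma> r d = r \<bullet> d - r \<bullet> e"
  by (simp add: subopt_def)

lemma convex_subopt_epigraph:
  "convex {q. subopt P \<mu>0 \<gamma> r (fst q) \<le> snd q}"
proof -
  have "subopt P \<mu>0 \<gamma> r (fst q) \<le> snd q \<longleftrightarrow> (SUP d'\<in>Phi P \<mu>0 \<gamma>. r \<bullet> d') \<le> (r, 1) \<bullet> q" for q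
    by (cases q) (simp add: subopt_def diff_le_eq add.commute)
  then show ?thesis
    by (simp only: convex_halfspace_ge)
qed

lemma subopt_le_on_convex_hull:
  assumes "\<forall>q\<in>S. subopt P \<mu>0 \<gamma> r (fst q) \<le> snd q"
    and "q \<in> convex hull S"
  shows "subopt P \<mu>0 \<gamma> r (fst q) \<le> snd q"
proof -
  have "convex hull S \<subseteq> {q. subopt P \<mu>0 \<gamma> r (fst q) \<le> snd q}"
    using assms(1) by (intro hull_minimal convex_subopt_epigraph) auto
  then show ?thesis
    using assms(2) by blast
qed

lemma reward_simplex_abs_le_one:
  assumes "r \<in> reward_simplex"
  shows "\<bar>r $ x\<bar> \<le> 1"
proof -
  have nonneg: "\<forall>y. 0 \<le> r $ y" and sum_one: "(\<Sum>y\<in>UNIV. r $ y) = 1"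
    using assms by (auto simp: reward_simplex_def)
  have "r $ x \<le> (\<Sum>y\<in>UNIV. r $ y)"
    using nonneg by (intro member_le_sum) auto
  then show ?thesis
    using nonneg sum_one by simp
qed

lemma inner_diff_le_l1dist:
  fixes r :: "real ^ 'n::finite"
  assumes "\<And>x. \<bar>r $ x\<bar> \<le> 1"
  shows "r \<bullet> d - r \<bullet> e \<le> l1dist d e"
proof -
  have "r \<bullet> d - r \<bullet> e = (\<Sum>x\<in>UNIV. r $ x * (d $ x - e $ x))"
    by (simp add: inner_vec_def sum_subtractf right_diff_distrib)
  also have "\<dots> \<le> (\<Sum>x\<in>UNIV. \<bar>d $ x - e $ x\<bar>)"
  proof (rule sum_mono)
    fix x
    have "r $ x * (d $ x - e $ x) \<le> \<bar>r $ x\<bar> * \<bar>d $ x - e $ x\<bar>"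
      unfolding abs_mult[symmetric] by (rule abs_ge_self)
    also have "\<dots> \<le> \<bar>d $ x - e $ x\<bar>"
      using assms[of x] by (intro mult_left_le_one_le) auto
    finally show "r $ x * (d $ x - e $ x) \<le> \<bar>d $ x - e $ x\<bar>" .
  qed
  finally show ?thesis
    by (simp add: l1dist_def)
qed

lemma subopt_le_subopt_plus_l1dist:
  assumes "r \<in> reward_simplex"
  shows "subopt P \<mu>0 \<gamma> r e \<le> subopt P \<mu>0 \<gamma> r d + l1dist d e"
  using inner_diff_le_l1dist[OF reward_simplex_abs_le_one[OF assms], of d e]
    subopt_diff[of P \<mu>0 \<gamma> r e d]
  by linarith

theorem mainTheorem2:
  fixes P :: "'s::finite \<Rightarrow> 'a::finite \<Rightarrow> 's \<Rightarrow> real"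
    and \<mu>0 :: "'s \<Rightarrow> real" and \<gamma> :: real
    and dstar :: "real ^ ('s \<times> 'a)"
    and K :: nat and dk :: "nat \<Rightarrow> real ^ ('s \<times> 'a)" and eps :: "nat \<Rightarrow> real"
  assumes P_nonneg: "\<forall>s a s'. 0 \<le> P s a s'"
    and P_sum: "\<forall>s a. (\<Sum>s'\<in>UNIV. P s a s') = 1"
    and mu_nonneg: "\<forall>s. 0 \<le> \<mu>0 s"
    and mu_sum: "(\<Sum>s\<in>UNIV. \<mu>0 s) = 1"
    and gamma: "0 < \<gamma>" "\<gamma> < 1"
    and K_pos: "0 < K"
    and dstar_Phi: "dstar \<in> Phi P \<mu>0 \<gamma>"
    and dk_Phi: "\<forall>k<K. dk k \<in> Phi P \<mu>0 \<gamma>"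
    and eps_nonneg: "\<forall>k<K. 0 \<le> eps k"
    and RD_ne: "RD P \<mu>0 \<gamma> K dk eps \<noteq> {}"
  shows "Gap P \<mu>0 \<gamma> (RD P \<mu>0 \<gamma> K dk eps) dstar
           \<le> (INF p\<in>convex hull ((\<lambda>k. (dk k, eps k)) ` {..<K}). l1dist (fst p) dstar + snd p)"
proof -
  let ?H = "convex hull ((\<lambda>k. (dk k, eps k)) ` {..<K})"
  have H_ne: "?H \<noteq> {}"
    using K_pos by auto
  have bound: "subopt P \<mu>0 \<gamma> r dstar \<le> l1dist (fst p) dstar + snd p"
    if r: "r \<in> RD P \<mu>0 \<gamma> K dk eps" and p: "p \<in> ?H" for r p
  proof -
    have "subopt P \<mu>0 \<gamma> r (fst p) \<le> snd p"
      using r p by (intro subopt_le_on_convex_hull) (auto simp: RD_def)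
    moreover have "subopt P \<mu>0 \<gamma> r dstar \<le> subopt P \<mu>0 \<gamma> r (fst p) + l1dist (fst p) dstar"
      using r by (intro subopt_le_subopt_plus_l1dist) (simp add: RD_def)
    ultimately show ?thesis
      by linarith
  qed
  show ?thesis
    unfolding Gap_def by (rule cSUP_least[OF RD_ne], rule cINF_greatest[OF H_ne], rule bound)
qed

end
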